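(* Let $M=\mathrm{Mon}\langle \Sigma \mid R\rangle$ be a finitely presented monoid and let $\mathfrak{R}$ be a rewriting system for $M$ that is complete and cyclically complete. Let $u,v\in\Sigma^*$. If $u=_M v$, then $\rho(u)\simeq\rho(v)$.
   Context: $\Sigma^*$ is the free monoid on the alphabet $\Sigma$; $=_M$ is equality in $M$. A rewriting system $\mathfrak{R}$ is a set of rules $l\to r$ with $l,r\in\Sigma^*$; $plq\to prq$ is one rewriting step. $\mathfrak{R}$ is complete for $M$ if it is terminating, confluent, and the congruence it generates on $\Sigma^*$ is $=_M$. $u\simeq v$ means $u=ab$, $v=ba$ for some words $a,b$ (cyclic conjugates in $\Sigma^*$). $u\rightsquigarrow v$ means some cyclic conjugate $\tilde u$ of $u$ (possibly $u$) satisfies $\tilde u\to v$; $\rightsquigarrow^*$ is its reflexive–transitive closure. $\mathfrak{R}$ is cyclically terminating if there is no infinite sequence $u_1\rightsquigarrow u_2\rightsquigarrow\cdots$; cyclically confluent if whenever $w\rightsquigarrow^* u$ and $w\rightsquigarrow^* v$ there exist $z\simeq z'$ with $u\rightsquigarrow^* z$ and $v\rightsquigarrow^* z'$; cyclically complete if both. A word is cyclically irreducible if it and all its cyclic conjugates are irreducible modulo $\mathfrak{R}$. $\rho(u)$ denotes a cyclically irreducible form of $u$, i.e. a cyclically irreducible word $w$ with $u\rightsquigarrow^* w$; when $\mathfrak{R}$ is cyclically complete, every word has such a form, unique up to $\simeq$. *)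

theory Defs
  imports Main
begin

type_synonym 'a rules = "('a list \<times> 'a list) set"

definition rstep :: "'a rules \<Rightarrow> 'a list \<Rightarrow> 'a list \<Rightarrow> bool" where
  "rstep Rs x y \<longleftrightarrow> (\<exists>p q l r. (l, r) \<in> Rs \<and> x = p @ l @ q \<and> y = p @ r @ q)"

definition cyc_conj :: "'a list \<Rightarrow> 'a list \<Rightarrow> bool" where
  "cyc_conj u v \<longleftrightarrow> (\<exists>a b. u = a @ b \<and> v = b @ a)"

definition cstep :: "'a rules \<Rightarrow> 'a list \<Rightarrow> 'a list \<Rightarrow> bool" where
  "cstep Rs u v \<longleftrightarrow> (\<exists>u'. cyc_conj u u' \<and> rstep Rs u' v)"

definition cong_gen :: "'a rules \<Rightarrow> 'a list \<Rightarrow> 'a list \<Rightarrow> bool" where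
  "cong_gen Rs = (symclp (rstep Rs))\<^sup>*\<^sup>*"

definition terminating :: "'a rules \<Rightarrow> bool" where
  "terminating Rs \<longleftrightarrow> \<not> (\<exists>f. \<forall>i. rstep Rs (f i) (f (Suc i)))"

definition confluent :: "'a rules \<Rightarrow> bool" where
  "confluent Rs \<longleftrightarrow> (\<forall>w u v. (rstep Rs)\<^sup>*\<^sup>* w u \<and> (rstep Rs)\<^sup>*\<^sup>* w v \<longrightarrow>
      (\<exists>z. (rstep Rs)\<^sup>*\<^sup>* u z \<and> (rstep Rs)\<^sup>*\<^sup>* v z))"

definition complete_for :: "'a rules \<Rightarrow> 'a rules \<Rightarrow> bool" where
  "complete_for Rs Rel \<longleftrightarrow> terminating Rs \<and> confluent Rs \<and> cong_gen Rs = cong_gen Rel"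

definition cyc_terminating :: "'a rules \<Rightarrow> bool" where
  "cyc_terminating Rs \<longleftrightarrow> \<not> (\<exists>f. \<forall>i. cstep Rs (f i) (f (Suc i)))"

definition cyc_confluent :: "'a rules \<Rightarrow> bool" where
  "cyc_confluent Rs \<longleftrightarrow> (\<forall>w u v. (cstep Rs)\<^sup>*\<^sup>* w u \<and> (cstep Rs)\<^sup>*\<^sup>* w v \<longrightarrow>
      (\<exists>z z'. cyc_conj z z' \<and> (cstep Rs)\<^sup>*\<^sup>* u z \<and> (cstep Rs)\<^sup>*\<^sup>* v z'))"

definition cyc_complete :: "'a rules \<Rightarrow> bool" where
  "cyc_complete Rs \<longleftrightarrow> cyc_terminating Rs \<and> cyc_confluent Rs"

definition irreducible :: "'a rules \<Rightarrow> 'a list \<Rightarrow> bool" where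
  "irreducible Rs w \<longleftrightarrow> \<not> (\<exists>y. rstep Rs w y)"

definition cyc_irreducible :: "'a rules \<Rightarrow> 'a list \<Rightarrow> bool" where
  "cyc_irreducible Rs w \<longleftrightarrow> (\<forall>w'. cyc_conj w w' \<longrightarrow> irreducible Rs w')"

definition is_rho :: "'a rules \<Rightarrow> 'a list \<Rightarrow> 'a list \<Rightarrow> bool" where
  "is_rho Rs u w \<longleftrightarrow> cyc_irreducible Rs w \<and> (cstep Rs)\<^sup>*\<^sup>* u w"

end

theory Submission
  imports Defs "HOL-Library.Confluence"
begin

text \<open>
  By the Church--Rosser property, \<open>u\<close> and \<open>v\<close> rewrite to a common word \<open>n\<close>. A cyclically
  irreducible word admits no cyclic rewriting step, so cyclic confluence both transports a
  cyclically irreducible form of a word, up to conjugacy, to one of any of its descendants,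
  and makes any two such forms of one word conjugate. Hence \<open>\<rho>(u)\<close> and \<open>\<rho>(v)\<close> are
  conjugate to forms of \<open>n\<close>, and so to each other.
\<close>

lemma confluentp_imp_joinable_conversion:
  assumes "confluentp r" "(symclp r)\<^sup>*\<^sup>* x y"
  shows "\<exists>z. r\<^sup>*\<^sup>* x z \<and> r\<^sup>*\<^sup>* y z"
  using assms(2)
proof (induction rule: rtranclp_induct)
  case base
  then show ?case by blast
next
  case (step y y')
  then obtain z where z: "r\<^sup>*\<^sup>* x z" "r\<^sup>*\<^sup>* y z" by blast
  from step.hyps(2) show ?case
  proof (cases rule: symclpE)
    case base
    with z(2) obtain z' where "r\<^sup>*\<^sup>* z z'" "r\<^sup>*\<^sup>* y' z'"
      using confluentpD[OF assms(1)] by (meson r_into_rtranclp)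
    with z(1) show ?thesis by (meson rtranclp_trans)
  next
    case sym
    with z show ?thesis by (meson converse_rtranclp_into_rtranclp)
  qed
qed

lemma confluent_iff_confluentp: "confluent Rs \<longleftrightarrow> confluentp (rstep Rs)"
proof
  assume "confluent Rs"
  then show "confluentp (rstep Rs)"
    unfolding confluent_def by (intro confluentpI) blast
next
  assume "confluentp (rstep Rs)"
  then show "confluent Rs"
    unfolding confluent_def using confluentpD by metis
qed

lemma cyc_conj_iff_rotate: "cyc_conj u v \<longleftrightarrow> (\<exists>n. v = rotate n u)"
proof
  assume "cyc_conj u v"
  then show "\<exists>n. v = rotate n u"
    unfolding cyc_conj_def by (metis rotate_append)
next
  assume "\<exists>n. v = rotate n u"
  then show "cyc_conj u v"
    unfolding cyc_conj_def by (metis append_take_drop_id rotate_drop_take)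
qed

lemma cyc_conj_refl: "cyc_conj u u"
  unfolding cyc_conj_def by (rule exI[of _ "[]"]) simp

lemma cyc_conj_sym: "cyc_conj u v \<Longrightarrow> cyc_conj v u"
  unfolding cyc_conj_def by blast

lemma cyc_conj_trans: "cyc_conj u v \<Longrightarrow> cyc_conj v w \<Longrightarrow> cyc_conj u w"
  by (metis cyc_conj_iff_rotate rotate_rotate)

lemma rstep_imp_cstep: "rstep Rs u v \<Longrightarrow> cstep Rs u v"
  unfolding cstep_def using cyc_conj_refl by blast

lemma rtranclp_rstep_imp_cstep: "(rstep Rs)\<^sup>*\<^sup>* u v \<Longrightarrow> (cstep Rs)\<^sup>*\<^sup>* u v"
  using mono_rtranclp[of "rstep Rs" "cstep Rs"] rstep_imp_cstep by blast

lemma cyc_irreducible_cstep_rtranclp_eq: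
  assumes "cyc_irreducible Rs w" "(cstep Rs)\<^sup>*\<^sup>* w z"
  shows "z = w"
  using assms(2)
proof (cases rule: converse_rtranclpE)
  case (step y)
  with assms(1) show ?thesis
    unfolding cstep_def cyc_irreducible_def irreducible_def by blast
qed simp

lemma cyc_irreducible_cyc_conj:
  "cyc_irreducible Rs w \<Longrightarrow> cyc_conj w z \<Longrightarrow> cyc_irreducible Rs z"
  unfolding cyc_irreducible_def by (meson cyc_conj_trans)

lemma is_rho_unique_up_to_cyc_conj:
  assumes "cyc_confluent Rs" "is_rho Rs u w" "is_rho Rs u w'"
  shows "cyc_conj w w'"
proof -
  have "(cstep Rs)\<^sup>*\<^sup>* u w" "(cstep Rs)\<^sup>*\<^sup>* u w'"
    using assms(2,3) unfolding is_rho_def by blast+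
  with assms(1) obtain z z' where zz': "cyc_conj z z'" "(cstep Rs)\<^sup>*\<^sup>* w z" "(cstep Rs)\<^sup>*\<^sup>* w' z'"
    unfolding cyc_confluent_def by blast
  have "z = w" "z' = w'"
    using assms(2,3) zz'(2,3) cyc_irreducible_cstep_rtranclp_eq unfolding is_rho_def by blast+
  with zz'(1) show ?thesis by simp
qed

lemma is_rho_descendant:
  assumes "cyc_confluent Rs" "is_rho Rs u w" "(cstep Rs)\<^sup>*\<^sup>* u n"
  obtains z where "is_rho Rs n z" "cyc_conj w z"
proof -
  have irr: "cyc_irreducible Rs w" and "(cstep Rs)\<^sup>*\<^sup>* u w"
    using assms(2) unfolding is_rho_def by blast+
  with assms(1,3) obtain y z where yz: "cyc_conj y z" "(cstep Rs)\<^sup>*\<^sup>* w y" "(cstep Rs)\<^sup>*\<^sup>* n z"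
    unfolding cyc_confluent_def by blast
  from irr yz(2) have "y = w"
    by (rule cyc_irreducible_cstep_rtranclp_eq)
  with yz irr have "is_rho Rs n z" "cyc_conj w z"
    unfolding is_rho_def by (auto intro: cyc_irreducible_cyc_conj)
  then show thesis by (rule that)
qed

theorem lemma3p2:
  fixes Sigma :: "'a set" and Rel Rs :: "'a rules" and u v w w' :: "'a list"
  assumes "finite Sigma" and "finite Rel" and "Rel \<subseteq> lists Sigma \<times> lists Sigma"
    and "Rs \<subseteq> lists Sigma \<times> lists Sigma"
    and "complete_for Rs Rel" and "cyc_complete Rs"
    and "u \<in> lists Sigma" and "v \<in> lists Sigma"
    and "cong_gen Rel u v"
    and "is_rho Rs u w" and "is_rho Rs v w'"
  shows "cyc_conj w w'"
proof -
  have cc: "cyc_confluent Rs"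
    using assms(6) unfolding cyc_complete_def by blast
  have "confluentp (rstep Rs)" and "cong_gen Rs u v"
    using assms(5,9) unfolding complete_for_def confluent_iff_confluentp by simp_all
  then obtain n where "(rstep Rs)\<^sup>*\<^sup>* u n" "(rstep Rs)\<^sup>*\<^sup>* v n"
    unfolding cong_gen_def by (blast dest: confluentp_imp_joinable_conversion)
  then have "(cstep Rs)\<^sup>*\<^sup>* u n" "(cstep Rs)\<^sup>*\<^sup>* v n"
    by (simp_all add: rtranclp_rstep_imp_cstep)
  then obtain z z' where z: "is_rho Rs n z" "cyc_conj w z"
    and z': "is_rho Rs n z'" "cyc_conj w' z'"
    by (metis is_rho_descendant[OF cc assms(10)] is_rho_descendant[OF cc assms(11)])
  from cc z(1) z'(1) have "cyc_conj z z'"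
    by (rule is_rho_unique_up_to_cyc_conj)
  with z(2) z'(2) show ?thesis
    by (meson cyc_conj_trans cyc_conj_sym)
qed

end
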